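(* Let $P$ be a directed complete poset. Then the map $\xi^\sigma_{\Sigma P}:\Sigma P\to \Sigma\,\mathsf{K}(\Sigma P)$, $x\mapsto\uparrow x$, is continuous.
   Context: A dcpo is a poset in which every directed subset has a supremum. For a poset $Q$, the Scott topology $\sigma(Q)$ consists of upper sets $U$ such that every directed $D$ whose supremum exists and lies in $U$ meets $U$; $\Sigma Q=(Q,\sigma(Q))$. For a $T_0$ space $Y$ (here $Y=\Sigma P$, whose specialization order is the order of $P$), $\mathsf{K}(Y)$ is the set of nonempty compact saturated (= upper in the specialization order) subsets, ordered by reverse inclusion; a family in $\mathsf{K}(Y)$ has a supremum iff its intersection lies in $\mathsf{K}(Y)$, and then the supremum is the intersection. $\Sigma\,\mathsf{K}(Y)$ is $\mathsf{K}(Y)$ with its Scott topology. *)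

theory Defs
  imports "HOL-Analysis.Analysis"
begin

definition directed_in :: "('a \<Rightarrow> 'a \<Rightarrow> bool) \<Rightarrow> 'a set \<Rightarrow> bool" where
  "directed_in le D \<longleftrightarrow> D \<noteq> {} \<and> (\<forall>x\<in>D. \<forall>y\<in>D. \<exists>z\<in>D. le x z \<and> le y z)"

definition is_sup_in :: "'a set \<Rightarrow> ('a \<Rightarrow> 'a \<Rightarrow> bool) \<Rightarrow> 'a set \<Rightarrow> 'a \<Rightarrow> bool" where
  "is_sup_in X le D s \<longleftrightarrow> s \<in> X \<and> (\<forall>d\<in>D. le d s) \<and> (\<forall>u\<in>X. (\<forall>d\<in>D. le d u) \<longrightarrow> le s u)"

definition upper_in :: "'a set \<Rightarrow> ('a \<Rightarrow> 'a \<Rightarrow> bool) \<Rightarrow> 'a set \<Rightarrow> bool" where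
  "upper_in X le U \<longleftrightarrow> U \<subseteq> X \<and> (\<forall>x\<in>U. \<forall>y\<in>X. le x y \<longrightarrow> y \<in> U)"

definition dcpo_on :: "'a set \<Rightarrow> ('a \<Rightarrow> 'a \<Rightarrow> bool) \<Rightarrow> bool" where
  "dcpo_on X le \<longleftrightarrow> (\<forall>D. D \<subseteq> X \<and> directed_in le D \<longrightarrow> (\<exists>s. is_sup_in X le D s))"

definition scott_open :: "'a set \<Rightarrow> ('a \<Rightarrow> 'a \<Rightarrow> bool) \<Rightarrow> 'a set \<Rightarrow> bool" where
  "scott_open X le U \<longleftrightarrow> upper_in X le U \<and>
     (\<forall>D s. D \<subseteq> X \<and> directed_in le D \<and> is_sup_in X le D s \<and> s \<in> U \<longrightarrow> D \<inter> U \<noteq> {})"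

definition scott_topology :: "'a set \<Rightarrow> ('a \<Rightarrow> 'a \<Rightarrow> bool) \<Rightarrow> 'a topology" where
  "scott_topology X le = topology (scott_open X le)"

text \<open>K(Sigma P): nonempty compact saturated (= upper) subsets of the Scott space of P,
  where P is the whole type 'a with its order.\<close>
definition K_Sigma :: "'a::order set set" where
  "K_Sigma = {K. K \<noteq> {} \<and> compactin (scott_topology UNIV (\<le>)) K \<and> upper_in UNIV (\<le>) K}"

end

theory Submission
  imports Defs
begin

text \<open>The map \<open>x \<mapsto> \<up>x\<close> is antitone into \<open>\<subseteq>\<close>, hence monotone into \<open>K\<close>, and a principal
  filter \<open>\<up>x\<close> is compact since every Scott open set containing \<open>x\<close> contains \<open>\<up>x\<close>.
  If \<open>s\<close> is the supremum of a directed set \<open>D\<close>, then any \<open>K \<in> K\<close> contained in every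
  \<open>\<up>d\<close> (\<open>d \<in> D\<close>) consists of upper bounds of \<open>D\<close>, so \<open>K \<subseteq> \<up>s\<close>: the map preserves
  directed suprema, and such maps are Scott continuous.\<close>

lemma scott_openI:
  assumes "U \<subseteq> X"
    and "\<And>x y. x \<in> U \<Longrightarrow> y \<in> X \<Longrightarrow> le x y \<Longrightarrow> y \<in> U"
    and "\<And>D s. D \<subseteq> X \<Longrightarrow> directed_in le D \<Longrightarrow> is_sup_in X le D s \<Longrightarrow> s \<in> U \<Longrightarrow> \<exists>d\<in>D. d \<in> U"
  shows "scott_open X le U"
  using assms unfolding scott_open_def upper_in_def by blast

lemma scott_open_subset: "scott_open X le U \<Longrightarrow> U \<subseteq> X"
  unfolding scott_open_def upper_in_def by blast

lemma scott_open_upward: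
  "scott_open X le U \<Longrightarrow> x \<in> U \<Longrightarrow> y \<in> X \<Longrightarrow> le x y \<Longrightarrow> y \<in> U"
  unfolding scott_open_def upper_in_def by blast

lemma scott_open_inaccessible:
  "scott_open X le U \<Longrightarrow> D \<subseteq> X \<Longrightarrow> directed_in le D \<Longrightarrow> is_sup_in X le D s \<Longrightarrow> s \<in> U
    \<Longrightarrow> \<exists>d\<in>D. d \<in> U"
  unfolding scott_open_def by blast

lemma directed_inE:
  assumes "directed_in le D" "a \<in> D" "b \<in> D"
  obtains c where "c \<in> D" "le a c" "le b c"
  using assms unfolding directed_in_def by blast

lemma istopology_scott_open: "istopology (scott_open X le)"
  unfolding istopology_def
proof (intro conjI allI impI ballI)
  fix S T assume S: "scott_open X le S" and T: "scott_open X le T"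
  show "scott_open X le (S \<inter> T)"
  proof (rule scott_openI)
    show "S \<inter> T \<subseteq> X" using scott_open_subset[OF S] by auto
    show "y \<in> S \<inter> T" if "x \<in> S \<inter> T" "y \<in> X" "le x y" for x y
      using that scott_open_upward[OF S, of x y] scott_open_upward[OF T, of x y] by blast
  next
    fix D s assume D: "D \<subseteq> X" "directed_in le D" "is_sup_in X le D s" and "s \<in> S \<inter> T"
    then obtain a b where "a \<in> D" "a \<in> S" "b \<in> D" "b \<in> T"
      using scott_open_inaccessible[OF S D] scott_open_inaccessible[OF T D] by blast
    moreover obtain c where "c \<in> D" "le a c" "le b c"
      using directed_inE[OF D(2) \<open>a \<in> D\<close> \<open>b \<in> D\<close>] .
    moreover have "c \<in> X" using D(1) \<open>c \<in> D\<close> by blast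
    ultimately show "\<exists>d\<in>D. d \<in> S \<inter> T"
      using scott_open_upward[OF S \<open>a \<in> S\<close>] scott_open_upward[OF T \<open>b \<in> T\<close>] by blast
  qed
next
  fix \<U> assume \<U>: "\<forall>S\<in>\<U>. scott_open X le S"
  show "scott_open X le (\<Union>\<U>)"
  proof (rule scott_openI)
    show "\<Union>\<U> \<subseteq> X" using \<U> scott_open_subset by (meson Union_least)
    show "y \<in> \<Union>\<U>" if "x \<in> \<Union>\<U>" "y \<in> X" "le x y" for x y
    proof -
      obtain S where "S \<in> \<U>" "x \<in> S" using \<open>x \<in> \<Union>\<U>\<close> by blast
      then have "y \<in> S" using \<U> scott_open_upward[of X le S x y] that(2,3) by blast
      with \<open>S \<in> \<U>\<close> show ?thesis by blast
    qed
    show "\<exists>d\<in>D. d \<in> \<Union>\<U>"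
      if D: "D \<subseteq> X" "directed_in le D" "is_sup_in X le D s" and "s \<in> \<Union>\<U>" for D s
    proof -
      obtain S where "S \<in> \<U>" "s \<in> S" using \<open>s \<in> \<Union>\<U>\<close> by blast
      then have "\<exists>d\<in>D. d \<in> S" using \<U> scott_open_inaccessible[OF _ D, of S] by blast
      with \<open>S \<in> \<U>\<close> show ?thesis by blast
    qed
  qed
qed

lemma openin_scott_topology: "openin (scott_topology X le) U \<longleftrightarrow> scott_open X le U"
  unfolding scott_topology_def by (simp add: topology_inverse'[OF istopology_scott_open])

lemma topspace_scott_topology: "topspace (scott_topology X le) = X"
proof -
  have "scott_open X le X"
    by (rule scott_openI) (auto simp: directed_in_def)
  then show ?thesis
    unfolding topspace_def openin_scott_topology using scott_open_subset by blast
qed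

lemma directed_in_image:
  assumes "directed_in le D" "D \<subseteq> X"
    and "\<And>x y. x \<in> X \<Longrightarrow> y \<in> X \<Longrightarrow> le x y \<Longrightarrow> le' (f x) (f y)"
  shows "directed_in le' (f ` D)"
  unfolding directed_in_def
proof (intro conjI ballI)
  show "f ` D \<noteq> {}" using assms(1) unfolding directed_in_def by blast
  fix u v assume "u \<in> f ` D" "v \<in> f ` D"
  then obtain a b where "a \<in> D" "b \<in> D" "u = f a" "v = f b" by blast
  moreover obtain c where "c \<in> D" "le a c" "le b c"
    using directed_inE[OF assms(1) \<open>a \<in> D\<close> \<open>b \<in> D\<close>] .
  ultimately show "\<exists>w\<in>f ` D. le' u w \<and> le' v w"
    using assms(2,3) by blast
qed

lemma continuous_map_scott_topology:
  assumes maps: "f \<in> X \<rightarrow> Y"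
    and mono: "\<And>x y. x \<in> X \<Longrightarrow> y \<in> X \<Longrightarrow> le x y \<Longrightarrow> le' (f x) (f y)"
    and sup: "\<And>D s. D \<subseteq> X \<Longrightarrow> directed_in le D \<Longrightarrow> is_sup_in X le D s
                \<Longrightarrow> is_sup_in Y le' (f ` D) (f s)"
  shows "continuous_map (scott_topology X le) (scott_topology Y le') f"
  unfolding continuous_map_def topspace_scott_topology openin_scott_topology
proof (intro conjI allI impI maps)
  fix U assume U: "scott_open Y le' U"
  show "scott_open X le {x \<in> X. f x \<in> U}"
  proof (rule scott_openI)
    show "y \<in> {x \<in> X. f x \<in> U}" if "x \<in> {x \<in> X. f x \<in> U}" "y \<in> X" "le x y" for x y
      using that maps mono scott_open_upward[OF U] by blast
  next
    fix D s assume D: "D \<subseteq> X" "directed_in le D" "is_sup_in X le D s"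
      and "s \<in> {x \<in> X. f x \<in> U}"
    have "f ` D \<subseteq> Y" using D(1) maps by blast
    moreover have "directed_in le' (f ` D)"
      using D(2,1) mono by (rule directed_in_image)
    moreover have "f s \<in> U" using \<open>s \<in> _\<close> by blast
    ultimately obtain d where "d \<in> D" "f d \<in> U"
      using scott_open_inaccessible[OF U _ _ sup[OF D]] by blast
    then show "\<exists>d\<in>D. d \<in> {x \<in> X. f x \<in> U}" using D(1) by blast
  qed blast
qed

lemma compactin_scott_principal_filter:
  "compactin (scott_topology UNIV (\<le>)) {y. (x::'a::order) \<le> y}"
  unfolding compactin_def topspace_scott_topology
proof (intro conjI allI impI)
  fix \<U> assume \<U>: "(\<forall>B\<in>\<U>. openin (scott_topology UNIV (\<le>)) B) \<and> {y. x \<le> y} \<subseteq> \<Union>\<U>"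
  then have "x \<in> \<Union>\<U>" by auto
  then obtain B where "B \<in> \<U>" "x \<in> B" by blast
  with \<U> have B: "scott_open UNIV (\<le>) B" by (simp add: openin_scott_topology)
  have "{y. x \<le> y} \<subseteq> B"
    using scott_open_upward[OF B \<open>x \<in> B\<close>] by blast
  then show "\<exists>\<F>. finite \<F> \<and> \<F> \<subseteq> \<U> \<and> {y. x \<le> y} \<subseteq> \<Union>\<F>"
    using \<open>B \<in> \<U>\<close> by (intro exI[of _ "{B}"]) simp
qed simp

lemma principal_filter_in_K_Sigma: "{y. (x::'a::order) \<le> y} \<in> K_Sigma"
proof -
  have "upper_in UNIV (\<le>) {y. x \<le> y}"
    unfolding upper_in_def by (auto dest: order_trans)
  then show ?thesis
    unfolding K_Sigma_def using compactin_scott_principal_filter by blast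
qed

lemma is_sup_in_K_Sigma_principal_filters:
  assumes sup: "is_sup_in UNIV (\<le>) D (s::'a::order)"
  shows "is_sup_in K_Sigma (\<lambda>A B. B \<subseteq> A) ((\<lambda>x. {y. x \<le> y}) ` D) {y. s \<le> y}"
proof -
  have "{y. s \<le> y} \<subseteq> {y. d \<le> y}" if "d \<in> D" for d
  proof -
    have "d \<le> s" using that sup unfolding is_sup_in_def by blast
    then show ?thesis by (auto dest: order_trans)
  qed
  moreover have "K \<subseteq> {y. s \<le> y}" if "\<forall>d\<in>D. K \<subseteq> {y. d \<le> y}" for K
    using that sup unfolding is_sup_in_def by blast
  ultimately show ?thesis
    unfolding is_sup_in_def by (simp add: principal_filter_in_K_Sigma)
qed

theorem mainTheorem7:
  assumes "dcpo_on (UNIV :: 'a::order set) (\<le>)"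
  shows "continuous_map (scott_topology (UNIV :: 'a set) (\<le>))
           (scott_topology K_Sigma (\<lambda>A B. B \<subseteq> A))
           (\<lambda>x. {y. x \<le> y})"
proof (rule continuous_map_scott_topology)
  show "(\<lambda>x. {y. x \<le> y}) \<in> UNIV \<rightarrow> K_Sigma"
    using principal_filter_in_K_Sigma by blast
  show "{z. y \<le> z} \<subseteq> {z. x \<le> z}" if "x \<le> y" for x y :: 'a
    using that order_trans by blast
  show "is_sup_in K_Sigma (\<lambda>A B. B \<subseteq> A) ((\<lambda>x. {y. x \<le> y}) ` D) {y. s \<le> y}"
    if "is_sup_in UNIV (\<le>) D s" for D and s :: 'a
    using that by (rule is_sup_in_K_Sigma_principal_filters)
qed

end
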